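(* Let $\widehat{\mathcal{A}}$ be the algebra of formal power series in variables $a,b$ satisfying $ab-ba=b^2$. The $\mathbb{C}$-vector space $$\tilde{\mathcal{A}}_{conv.}:=\Big\{\sum_{p,q}\gamma_{p,q}a^pb^q\ :\ \exists R>1,\ \exists C_R\ \text{such that}\ |\gamma_{p,q}|\le C_RR^{p+q}q!\ \ \forall p,q\Big\}$$ is a subalgebra of $\widehat{\mathcal{A}}$. Moreover $$\tilde{\mathcal{A}}_{conv.}=\Big\{\sum_{p,q}\delta_{p,q}b^qa^p\ :\ \exists R>1,\ \exists D_R\ \text{such that}\ |\delta_{p,q}|\le D_RR^{p+q}q!\ \ \forall p,q\Big\}.$$
   Context: $\mathcal{A}_0$ denotes the $\mathbb{C}$-algebra of polynomials in $a,b$ subject to $ab-ba=b^2$. $\widehat{\mathcal{A}}$ is its completion for the $(a,b)$-adic topology, i.e. the algebra of formal series whose elements can be uniquely written $\sum_{p,q\ge0}\gamma_{p,q}a^pb^q$ and also uniquely $\sum_{p,q\ge0}\delta_{p,q}b^qa^p$, with product extending that of $\mathcal{A}_0$ continuously for the $(a,b)$-adic topology. *)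

theory Defs
  imports Complex_Main
begin

text \<open>
  Concrete model of the completed algebra: an element of the completion is
  identified with its (unique) family of normal-ordered coefficients
  gamma p q, standing for the formal series  sum gamma p q a^p b^q.  The product is the continuous
  extension of the product of A_0, computed with the commutation rule
  b^q a^r = sum_k binom r k (-1)^k q(q+1)...(q+k-1) a^(r-k) b^(q+k),
  which follows from  f(b) a = a f(b) - b^2 f'(b)  (i.e. from ab - ba = b^2).
\<close>

type_synonym ser = "nat \<Rightarrow> nat \<Rightarrow> complex"

definition ser_zero :: ser where "ser_zero = (\<lambda>p q. 0)"

definition ser_one :: ser where "ser_one = (\<lambda>p q. if p = 0 \<and> q = 0 then 1 else 0)"

definition ser_add :: "ser \<Rightarrow> ser \<Rightarrow> ser" where
  "ser_add x y = (\<lambda>p q. x p q + y p q)"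

definition ser_smult :: "complex \<Rightarrow> ser \<Rightarrow> ser" where
  "ser_smult c x = (\<lambda>p q. c * x p q)"

text \<open>Product: coefficient of a^m b^n in (sum x p q a^p b^q)(sum y r s a^r b^s),
  collecting the term a^p (b^q a^r) b^s with r = m - p + k, s = n - k - q.\<close>
definition ser_mult :: "ser \<Rightarrow> ser \<Rightarrow> ser" where
  "ser_mult x y = (\<lambda>m n. \<Sum>p\<le>m. \<Sum>k\<le>n. \<Sum>q\<le>n - k.
      x p q * y (m - p + k) (n - k - q) * of_nat ((m - p + k) choose k)
        * (-1) ^ k * pochhammer (of_nat q) k)"

text \<open>Conversion from anti-normal ordered coefficients delta (series
  sum delta p q b^q a^p) to normal ordered coefficients, using the same rule
  b^q a^p = sum_k binom p k (-1)^k q(q+1)...(q+k-1) a^(p-k) b^(q+k).\<close>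
definition anti_to_normal :: "ser \<Rightarrow> ser" where
  "anti_to_normal d = (\<lambda>i j. \<Sum>k\<le>j.
      d (i + k) (j - k) * of_nat ((i + k) choose k) * (-1) ^ k
        * pochhammer (of_nat (j - k)) k)"

definition conv_bounded :: "ser \<Rightarrow> bool" where
  "conv_bounded c \<longleftrightarrow>
     (\<exists>R::real. R > 1 \<and> (\<exists>C::real. \<forall>p q. norm (c p q) \<le> C * R ^ (p + q) * fact q))"

definition A_conv :: "ser set" where
  "A_conv = {g. conv_bounded g}"

end

theory Submission
  imports Defs
begin

text \<open>
  Every coefficient of a product, or of a change of ordering, is a sum of polynomially many
  (in the indices m, n) terms.  Each term is a product of coefficients bounded by
  C R^(p+q) q!, a binomial coefficient at most 2^(m+n), and a Pochhammer symbol (q)_k, and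
  the factorials combine because q! (q)_k (n-k-q)! \<le> (q+k)! (n-k-q)! \<le> n!.  So the bound
  survives with R replaced by a fixed multiple of R.  The anti-normal to normal ordering map
  is inverted by the same formula without the signs (-1)^k, thanks to
  sum_k (-1)^k binom t k = 0 for t > 0; both directions preserve the growth condition,
  which gives the second description of the algebra.
\<close>

lemma fact_mult_pochhammer_le: "fact n * pochhammer n k \<le> (fact (n + k) :: nat)"
proof (induction k)
  case 0
  then show ?case by simp
next
  case (Suc k)
  have "fact n * pochhammer n (Suc k) = (fact n * pochhammer n k) * (n + k)"
    by (simp add: pochhammer_Suc)
  also have "\<dots> \<le> fact (n + k) * (n + k)" using Suc by simp
  also have "\<dots> \<le> fact (n + Suc k)" by simp
  finally show ?case .
qed

lemma fact_mult_fact_le: "a + b \<le> n \<Longrightarrow> fact a * fact b \<le> (fact n :: nat)"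
  using dvd_imp_le[OF fact_fact_dvd_fact[of a b]] fact_mono_nat[of "a + b" n] by simp

lemma fact_pochhammer_fact_le:
  assumes "q + k \<le> n"
  shows "fact q * pochhammer q k * fact (n - k - q) \<le> (fact n :: nat)"
proof -
  have "fact q * pochhammer q k * fact (n - k - q) \<le> fact (q + k) * fact (n - k - q)"
    using fact_mult_pochhammer_le[of q k] by simp
  also have "\<dots> \<le> fact n" using assms by (intro fact_mult_fact_le) simp
  finally show ?thesis .
qed

lemma real_le_two_power:
  assumes "a \<le> 2 ^ n" "n \<le> N"
  shows "real a \<le> 2 ^ N"
proof -
  have "a \<le> 2 ^ N"
    using assms power_increasing[of n N "2::nat"] by linarith
  then show ?thesis
    by (metis of_nat_le_iff of_nat_numeral of_nat_power)
qed

lemma real_choose_le_two_power: "n \<le> N \<Longrightarrow> real (n choose k) \<le> 2 ^ N"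
  using real_le_two_power[OF binomial_le_pow2] .

lemma real_Suc_le_two_power: "n \<le> N \<Longrightarrow> real (Suc n) \<le> 2 ^ N"
  using real_le_two_power[OF Suc_leI[OF less_exp]] .

lemma norm_pochhammer_of_nat:
  "norm (pochhammer (of_nat q) k :: complex) = real (pochhammer q k)"
  by (simp only: pochhammer_of_nat norm_of_nat)

definition coeff_bound :: "real \<Rightarrow> real \<Rightarrow> ser \<Rightarrow> bool" where
  "coeff_bound R C c \<longleftrightarrow> (\<forall>p q. norm (c p q) \<le> C * R ^ (p + q) * fact q)"

lemma conv_bounded_iff: "conv_bounded c \<longleftrightarrow> (\<exists>R>1. \<exists>C. coeff_bound R C c)"
  unfolding conv_bounded_def coeff_bound_def ..

lemma coeff_boundD: "coeff_bound R C c \<Longrightarrow> norm (c p q) \<le> C * R ^ (p + q) * fact q"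
  unfolding coeff_bound_def by blast

lemma coeff_bound_nonneg: "coeff_bound R C c \<Longrightarrow> 0 \<le> C"
  using order_trans[OF norm_ge_zero coeff_boundD[of R C c 0 0]] by simp

lemma coeff_bound_mono_radius:
  assumes c: "coeff_bound R C c" and "0 \<le> R" "R \<le> R'"
  shows "coeff_bound R' C c"
  unfolding coeff_bound_def
proof (intro allI)
  fix p q
  have "C * R ^ (p + q) * fact q \<le> C * R' ^ (p + q) * fact q"
    using assms coeff_bound_nonneg[OF c] by (intro mult_right_mono mult_left_mono power_mono) auto
  then show "norm (c p q) \<le> C * R' ^ (p + q) * fact q"
    using coeff_boundD[OF c] order_trans by blast
qed

lemma conv_bounded_common_radius:
  assumes "conv_bounded x" "conv_bounded y"
  obtains R C1 C2 where "R > 1" "coeff_bound R C1 x" "coeff_bound R C2 y"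
proof -
  obtain R1 C1 R2 C2 where "R1 > 1" "coeff_bound R1 C1 x" "R2 > 1" "coeff_bound R2 C2 y"
    using assms unfolding conv_bounded_iff by blast
  then show thesis
    using that[of "max R1 R2" C1 C2] coeff_bound_mono_radius[of R1 C1 x "max R1 R2"]
      coeff_bound_mono_radius[of R2 C2 y "max R1 R2"]
    by auto
qed

lemma coeff_bound_add:
  "coeff_bound R C1 x \<Longrightarrow> coeff_bound R C2 y \<Longrightarrow> coeff_bound R (C1 + C2) (ser_add x y)"
  unfolding coeff_bound_def ser_add_def
proof (intro allI)
  fix p q
  assume x: "\<forall>p q. norm (x p q) \<le> C1 * R ^ (p + q) * fact q"
    and y: "\<forall>p q. norm (y p q) \<le> C2 * R ^ (p + q) * fact q"
  have "norm (x p q + y p q) \<le> C1 * R ^ (p + q) * fact q + C2 * R ^ (p + q) * fact q"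
    using x y by (intro norm_triangle_le add_mono) auto
  then show "norm (x p q + y p q) \<le> (C1 + C2) * R ^ (p + q) * fact q"
    by (simp add: algebra_simps)
qed

lemma coeff_bound_smult: "coeff_bound R C x \<Longrightarrow> coeff_bound R (norm c * C) (ser_smult c x)"
  unfolding coeff_bound_def ser_smult_def
  by (auto simp: norm_mult mult.assoc intro: mult_left_mono)

lemma norm_ser_mult_term_le:
  assumes x: "coeff_bound R C1 x" and y: "coeff_bound R C2 y" and R: "0 \<le> R"
    and h: "p \<le> m" "k \<le> n" "q \<le> n - k"
  shows "norm (x p q * y (m - p + k) (n - k - q) * of_nat ((m - p + k) choose k)
      * (-1) ^ k * pochhammer (of_nat q) k) \<le> C1 * C2 * (2 * R) ^ (m + n) * fact n"
proof -
  have C: "0 \<le> C1" "0 \<le> C2" using coeff_bound_nonneg x y by blast+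
  have e: "p + q + (m - p + k + (n - (k + q))) = m + n" using h by simp
  have "norm (x p q * y (m - p + k) (n - k - q) * of_nat ((m - p + k) choose k)
      * (-1) ^ k * pochhammer (of_nat q) k)
      = norm (x p q) * norm (y (m - p + k) (n - k - q)) * real ((m - p + k) choose k)
        * real (pochhammer q k)"
    unfolding norm_mult norm_pochhammer_of_nat norm_of_nat by (simp add: norm_power)
  also have "\<dots> \<le> (C1 * R ^ (p + q) * fact q)
        * (C2 * R ^ (m - p + k + (n - k - q)) * fact (n - k - q)) * real ((m - p + k) choose k) * real (pochhammer q k)"
    using coeff_boundD[OF x, of p q] coeff_boundD[OF y, of "m - p + k" "n - k - q"] C R
    by (intro mult_right_mono mult_mono) auto
  also have "\<dots> = C1 * C2 * R ^ (m + n)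
      * (real (fact q * pochhammer q k * fact (n - k - q)) * real ((m - p + k) choose k))"
    by (simp add: e flip: power_add)
  also have "\<dots> \<le> C1 * C2 * R ^ (m + n) * (real (fact n) * 2 ^ (m + n))"
  proof -
    have "real (fact q * pochhammer q k * fact (n - k - q)) \<le> real (fact n)"
      using fact_pochhammer_fact_le[of q k n] h by (simp only: of_nat_le_iff)
    then show ?thesis
      using C R h by (intro mult_left_mono mult_mono real_choose_le_two_power) auto
  qed
  also have "\<dots> = C1 * C2 * (2 * R) ^ (m + n) * fact n"
    by (simp add: power_mult_distrib)
  finally show ?thesis .
qed

lemma coeff_bound_ser_mult:
  assumes x: "coeff_bound R C1 x" and y: "coeff_bound R C2 y" and R: "0 \<le> R"
  shows "coeff_bound (16 * R) (C1 * C2) (ser_mult x y)"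
  unfolding coeff_bound_def
proof (intro allI)
  fix m n
  define B where "B = C1 * C2 * (2 * R) ^ (m + n) * fact n"
  have B: "0 \<le> B"
    unfolding B_def using coeff_bound_nonneg x y R by simp
  have "norm (ser_mult x y m n) \<le> (\<Sum>p\<le>m. \<Sum>k\<le>n. \<Sum>q\<le>n - k. B)"
    unfolding ser_mult_def B_def using norm_ser_mult_term_le[OF x y R]
    by (intro order_trans[OF norm_sum] sum_mono order_trans[OF norm_sum]) auto
  also have "\<dots> \<le> (\<Sum>p\<le>m. \<Sum>k\<le>n. \<Sum>q\<le>n. B)"
    using B by (intro sum_mono sum_mono2) auto
  also have "\<dots> = real (Suc m) * (real (Suc n) * (real (Suc n) * B))"
    by simp
  also have "\<dots> \<le> 2 ^ (m + n) * (2 ^ (m + n) * (2 ^ (m + n) * B))"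
    using B real_Suc_le_two_power[of m "m + n"] real_Suc_le_two_power[of n "m + n"]
    by (intro mult_mono) auto
  also have "\<dots> = C1 * C2 * (16 * R) ^ (m + n) * fact n"
  proof -
    have "(16 * R) ^ (m + n) = 2 ^ (m + n) * (2 ^ (m + n) * (2 ^ (m + n) * (2 * R) ^ (m + n)))"
      by (simp only: power_mult_distrib[symmetric]) simp
    then show ?thesis
      unfolding B_def by (simp only: mult_ac)
  qed
  finally show "norm (ser_mult x y m n) \<le> C1 * C2 * (16 * R) ^ (m + n) * fact n" .
qed

subsection \<open>Change of ordering\<close>

text \<open>With weights s k = (-1)^k this is anti_to_normal; with s k = 1 it is the inverse
  conversion from normal to anti-normal coefficients, by a f(b) = f(b) a + b^2 f'(b).\<close>
definition reorder :: "(nat \<Rightarrow> complex) \<Rightarrow> ser \<Rightarrow> ser" where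
  "reorder s d = (\<lambda>i j. \<Sum>k\<le>j. d (i + k) (j - k) * of_nat ((i + k) choose k) * s k
      * pochhammer (of_nat (j - k)) k)"

lemma anti_to_normal_eq_reorder: "anti_to_normal = reorder (\<lambda>k. (-1) ^ k)"
  by (simp add: anti_to_normal_def reorder_def fun_eq_iff)

lemma norm_reorder_term_le:
  assumes d: "coeff_bound R C d" and R: "0 \<le> R" and s: "norm (s k) \<le> 1" and k: "k \<le> j"
  shows "norm (d (i + k) (j - k) * of_nat ((i + k) choose k) * s k
      * pochhammer (of_nat (j - k)) k) \<le> C * (2 * R) ^ (i + j) * fact j"
proof -
  have C: "0 \<le> C" using coeff_bound_nonneg[OF d] .
  have e: "i + k + (j - k) = i + j" using k by simp
  have "norm (d (i + k) (j - k) * of_nat ((i + k) choose k) * s k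
      * pochhammer (of_nat (j - k)) k)
      \<le> (C * R ^ (i + j) * fact (j - k)) * real ((i + k) choose k) * 1
        * real (pochhammer (j - k) k)"
    unfolding norm_mult norm_pochhammer_of_nat norm_of_nat
    using coeff_boundD[OF d, of "i + k" "j - k"] s C R
    by (intro mult_mono) (auto simp: e)
  also have "\<dots> = C * R ^ (i + j)
      * (real (fact (j - k) * pochhammer (j - k) k) * real ((i + k) choose k))"
    by simp
  also have "\<dots> \<le> C * R ^ (i + j) * (real (fact j) * 2 ^ (i + j))"
  proof -
    have "real (fact (j - k) * pochhammer (j - k) k) \<le> real (fact j)"
      using fact_mult_pochhammer_le[of "j - k" k] k by (simp only: of_nat_le_iff) simp
    then show ?thesis
      using C R k by (intro mult_left_mono mult_mono real_choose_le_two_power) auto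
  qed
  also have "\<dots> = C * (2 * R) ^ (i + j) * fact j"
    by (simp add: power_mult_distrib)
  finally show ?thesis .
qed

lemma coeff_bound_reorder:
  assumes d: "coeff_bound R C d" and R: "0 \<le> R" and s: "\<And>k. norm (s k) \<le> 1"
  shows "coeff_bound (4 * R) C (reorder s d)"
  unfolding coeff_bound_def
proof (intro allI)
  fix i j
  define B where "B = C * (2 * R) ^ (i + j) * fact j"
  have "norm (reorder s d i j) \<le> real (card {..j}) * B"
    unfolding reorder_def B_def using norm_reorder_term_le[OF d R s]
    by (intro sum_norm_bound) auto
  also have "\<dots> \<le> 2 ^ (i + j) * B"
    using real_Suc_le_two_power[of j "i + j"] coeff_bound_nonneg[OF d] R unfolding B_def
    by (intro mult_right_mono) auto
  also have "\<dots> = C * (4 * R) ^ (i + j) * fact j"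
  proof -
    have "(4 * R) ^ (i + j) = 2 ^ (i + j) * (2 * R) ^ (i + j)"
      by (simp only: power_mult_distrib[symmetric]) simp
    then show ?thesis
      unfolding B_def by (simp only: mult_ac)
  qed
  finally show "norm (reorder s d i j) \<le> C * (4 * R) ^ (i + j) * fact j" .
qed

lemma conv_bounded_reorder:
  assumes "conv_bounded d" "\<And>k. norm (s k) \<le> 1"
  shows "conv_bounded (reorder s d)"
proof -
  obtain R C where "R > 1" "coeff_bound R C d"
    using assms(1) unfolding conv_bounded_iff by blast
  then have "4 * R > 1" "coeff_bound (4 * R) C (reorder s d)"
    using coeff_bound_reorder assms(2) by auto
  then show ?thesis
    unfolding conv_bounded_iff by blast
qed

lemma choose_mult_choose_shift:
  assumes "k \<le> t"
  shows "((i + t) choose (t - k)) * ((i + k) choose k) = ((i + t) choose t) * (t choose k)"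
proof -
  have "((i + t) choose t) * (t choose k) = ((i + t) choose k) * ((i + t - k) choose (t - k))"
    using assms by (intro choose_mult) auto
  also have "(i + t - k) choose (t - k) = (i + t - k) choose i"
    using assms by (metis Nat.add_diff_assoc add_diff_cancel_left' binomial_symmetric le_add1)
  also have "((i + t) choose k) * ((i + t - k) choose i)
      = ((i + t) choose (i + k)) * ((i + k) choose k)"
    using choose_mult_lemma[of i "t - k" k] assms by (simp add: ac_simps)
  also have "(i + t) choose (i + k) = (i + t) choose (t - k)"
    using assms by (metis Nat.diff_cancel add_left_mono binomial_symmetric)
  finally show ?thesis by simp
qed

lemma pochhammer_of_nat_diff_mult:
  assumes "k \<le> t" "t \<le> j"
  shows "pochhammer (of_nat (j - t)) (t - k) * pochhammer (of_nat (j - k)) k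
      = (pochhammer (of_nat (j - t)) t :: 'a :: comm_semiring_1)"
proof -
  have "(pochhammer (of_nat (j - t)) t :: 'a) = pochhammer (of_nat (j - t)) (t - k)
      * pochhammer (of_nat (j - t) + of_nat (t - k)) (t - (t - k))"
    by (rule pochhammer_product) simp
  moreover have "(of_nat (j - t) + of_nat (t - k) :: 'a) = of_nat (j - k)"
    using assms by (simp flip: of_nat_add)
  moreover have "t - (t - k) = k" using assms by simp
  ultimately show ?thesis by simp
qed

lemma anti_to_normal_reorder_one: "anti_to_normal (reorder (\<lambda>_. 1) g) = g"
proof (intro ext)
  fix i j
  define F where "F k l = g (i + k + l) (j - (k + l))
      * (of_nat ((i + k + l) choose l) * of_nat ((i + k) choose k)) * (-1) ^ k
      * (pochhammer (of_nat (j - (k + l))) l * pochhammer (of_nat (j - k)) k)" for k l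
  define G where "G t = g (i + t) (j - t) * of_nat ((i + t) choose t)
      * pochhammer (of_nat (j - t)) t" for t
  have "anti_to_normal (reorder (\<lambda>_. 1) g) i j = (\<Sum>k\<le>j. \<Sum>l\<le>j - k. F k l)"
    unfolding anti_to_normal_def reorder_def sum_distrib_right
    by (intro sum.cong refl) (simp add: F_def diff_diff_left add.assoc mult_ac)
  also have "\<dots> = (\<Sum>(k, l) \<in> {(k, l). k + l \<le> j}. F k l)"
    by (subst sum.Sigma) (auto intro: sum.cong)
  also have "\<dots> = (\<Sum>t\<le>j. \<Sum>k\<le>t. F k (t - k))"
    by (rule sum.triangle_reindex_eq)
  also have "\<dots> = (\<Sum>t\<le>j. G t * (\<Sum>k\<le>t. (-1) ^ k * of_nat (t choose k)))"
  proof (intro sum.cong refl)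
    fix t assume t: "t \<in> {..j}"
    have "F k (t - k) = G t * ((-1) ^ k * of_nat (t choose k))" if k: "k \<le> t" for k
    proof -
      have "(of_nat ((i + t) choose (t - k)) * of_nat ((i + k) choose k) :: complex)
          = of_nat ((i + t) choose t) * of_nat (t choose k)"
        using choose_mult_choose_shift[OF k, of i] by (metis of_nat_mult)
      moreover have "pochhammer (of_nat (j - t)) (t - k) * pochhammer (of_nat (j - k)) k
          = (pochhammer (of_nat (j - t)) t :: complex)"
        using t by (intro pochhammer_of_nat_diff_mult[OF k]) simp
      moreover have "i + k + (t - k) = i + t" "k + (t - k) = t" using k by auto
      ultimately show ?thesis unfolding F_def G_def by (simp add: algebra_simps)
    qed
    then show "(\<Sum>k\<le>t. F k (t - k)) = G t * (\<Sum>k\<le>t. (-1) ^ k * of_nat (t choose k))"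
      by (simp add: sum_distrib_left)
  qed
  also have "\<dots> = G 0"
    by (subst sum.mono_neutral_right[of "{..j}" "{0}"]) (auto simp: choose_alternating_sum)
  also have "\<dots> = g i j"
    unfolding G_def by simp
  finally show "anti_to_normal (reorder (\<lambda>_. 1) g) i j = g i j" .
qed

lemma conv_bounded_ser_zero: "conv_bounded ser_zero"
proof -
  have "coeff_bound 2 0 ser_zero"
    unfolding coeff_bound_def ser_zero_def by simp
  then show ?thesis
    unfolding conv_bounded_iff by (auto intro: exI[of _ 2])
qed

lemma conv_bounded_ser_one: "conv_bounded ser_one"
proof -
  have "1 \<le> (2::real) ^ (p + q) * fact q" for p q
    using mult_mono[OF one_le_power fact_ge_1, of "2::real" "p + q" q] by simp
  then have "coeff_bound 2 1 ser_one"
    unfolding coeff_bound_def ser_one_def by simp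
  then show ?thesis
    unfolding conv_bounded_iff by (auto intro: exI[of _ 2])
qed

lemma conv_bounded_ser_add:
  assumes "conv_bounded x" "conv_bounded y"
  shows "conv_bounded (ser_add x y)"
proof -
  obtain R C1 C2 where "R > 1" "coeff_bound R C1 x" "coeff_bound R C2 y"
    using conv_bounded_common_radius[OF assms] .
  then show ?thesis
    unfolding conv_bounded_iff using coeff_bound_add by blast
qed

lemma conv_bounded_ser_smult: "conv_bounded x \<Longrightarrow> conv_bounded (ser_smult c x)"
  unfolding conv_bounded_iff using coeff_bound_smult by blast

lemma conv_bounded_ser_mult:
  assumes "conv_bounded x" "conv_bounded y"
  shows "conv_bounded (ser_mult x y)"
proof -
  obtain R C1 C2 where "R > 1" "coeff_bound R C1 x" "coeff_bound R C2 y"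
    using conv_bounded_common_radius[OF assms] .
  then have "16 * R > 1" "coeff_bound (16 * R) (C1 * C2) (ser_mult x y)"
    using coeff_bound_ser_mult by auto
  then show ?thesis
    unfolding conv_bounded_iff by blast
qed

lemma conv_bounded_eq_anti_to_normal_image:
  "{c. conv_bounded c} = anti_to_normal ` {d. conv_bounded d}"
proof
  show "anti_to_normal ` {d. conv_bounded d} \<subseteq> {c. conv_bounded c}"
    unfolding anti_to_normal_eq_reorder by (auto intro!: conv_bounded_reorder simp: norm_power)
  show "{c. conv_bounded c} \<subseteq> anti_to_normal ` {d. conv_bounded d}"
  proof
    fix c assume "c \<in> {c. conv_bounded c}"
    then have "conv_bounded (reorder (\<lambda>_. 1) c)"
      by (auto intro: conv_bounded_reorder)
    then show "c \<in> anti_to_normal ` {d. conv_bounded d}"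
      using anti_to_normal_reorder_one[of c] by (metis image_eqI mem_Collect_eq)
  qed
qed

theorem proposition1p1p3:
  shows "ser_zero \<in> A_conv \<and> ser_one \<in> A_conv
    \<and> (\<forall>x\<in>A_conv. \<forall>y\<in>A_conv. ser_add x y \<in> A_conv)
    \<and> (\<forall>c. \<forall>x\<in>A_conv. ser_smult c x \<in> A_conv)
    \<and> (\<forall>x\<in>A_conv. \<forall>y\<in>A_conv. ser_mult x y \<in> A_conv)
    \<and> A_conv = anti_to_normal ` {d. conv_bounded d}"
  unfolding A_conv_def
  using conv_bounded_ser_zero conv_bounded_ser_one conv_bounded_ser_add conv_bounded_ser_smult
    conv_bounded_ser_mult conv_bounded_eq_anti_to_normal_image
  by blast

end
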